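(* Let $X$ be a compact metric countable space and $f:X\to X$ a continuous function such that every accumulation point of $X$ is periodic. Let $p\in\mathbb N^*$ and let $b\in X$ be an isolated point. If there is a sequence $(a_n)_{n\in\mathbb N}$ in $X$ such that $f^p(a_n)\to b$, then $b$ is periodic and $\mathcal O_f(b)=\omega_f(b)=\omega_f(a_n)$ for all but finitely many $n\in\mathbb N$.
   Context: $\mathbb N^*$ denotes the set of free ultrafilters on $\mathbb N$. For $p\in\mathbb N^*$ and a sequence $(x_n)$ in $X$, $x=p\text{-}\lim_{n\to\infty}x_n$ means that for every neighborhood $V$ of $x$, $\{n\in\mathbb N: x_n\in V\}\in p$. The $p$-iterate of $f$ is $f^p(x)=p\text{-}\lim_{n\to\infty}f^n(x)$. The orbit of $x$ is $\mathcal O_f(x)=\{f^n(x):n\in\mathbb N\}$. The $\omega$-limit set $\omega_f(x)$ is the set of $y\in X$ such that $f^{n_k}(x)\to y$ for some strictly increasing sequence $(n_k)$ of naturals. A point $x$ is periodic if $f^n(x)=x$ for some $n\ge 1$. An accumulation point of $X$ is a non-isolated point. *)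

theory Defs
  imports "HOL-Analysis.Analysis"
begin

definition free_ultrafilter :: "nat set set \<Rightarrow> bool" where
  "free_ultrafilter p \<longleftrightarrow>
     {} \<notin> p \<and>
     (\<forall>A B. A \<in> p \<and> A \<subseteq> B \<longrightarrow> B \<in> p) \<and>
     (\<forall>A B. A \<in> p \<and> B \<in> p \<longrightarrow> A \<inter> B \<in> p) \<and>
     (\<forall>A. A \<in> p \<or> - A \<in> p) \<and>
     (\<forall>A. finite A \<longrightarrow> A \<notin> p)"

text \<open>y is the p-limit of the sequence x (neighbourhoods in the subspace X are traces of
  open sets, so it suffices to quantify over open sets of the ambient space).\<close>
definition plim :: "nat set set \<Rightarrow> (nat \<Rightarrow> 'a::topological_space) \<Rightarrow> 'a \<Rightarrow> bool" where
  "plim p x y \<longleftrightarrow> (\<forall>V. open V \<and> y \<in> V \<longrightarrow> {n. x n \<in> V} \<in> p)"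

definition p_iterate :: "'a::topological_space set \<Rightarrow> nat set set \<Rightarrow> ('a \<Rightarrow> 'a) \<Rightarrow> 'a \<Rightarrow> 'a" where
  "p_iterate X p f x = (THE y. y \<in> X \<and> plim p (\<lambda>n. (f ^^ n) x) y)"

definition orbit :: "('a \<Rightarrow> 'a) \<Rightarrow> 'a \<Rightarrow> 'a set" where
  "orbit f x = {(f ^^ n) x | n. True}"

definition omega_limit :: "('a \<Rightarrow> 'a) \<Rightarrow> 'a::topological_space \<Rightarrow> 'a set" where
  "omega_limit f x = {y. \<exists>r. strict_mono r \<and> (\<lambda>k. (f ^^ (r k)) x) \<longlonglongrightarrow> y}"

definition periodic_point :: "('a \<Rightarrow> 'a) \<Rightarrow> 'a \<Rightarrow> bool" where
  "periodic_point f x \<longleftrightarrow> (\<exists>n\<ge>1. (f ^^ n) x = x)"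

end

theory Submission
  imports Defs
begin

text \<open>Since \<open>b\<close> is isolated, \<open>f\<^sup>p(a\<^sub>n) \<rightarrow> b\<close> forces \<open>f\<^sup>p(a\<^sub>n) = b\<close> for almost all
  \<open>n\<close>, and then the set of times \<open>k\<close> with \<open>f\<^sup>k(a\<^sub>n) = b\<close> belongs to the free ultrafilter
  \<open>p\<close>, so it is infinite. Two visits of the orbit of \<open>a\<^sub>n\<close> to \<open>b\<close> make \<open>b\<close> periodic, and an
  orbit visiting a periodic point infinitely often has the (finite, hence closed) periodic
  orbit as its \<open>\<omega>\<close>-limit set.\<close>

lemma
  assumes "free_ultrafilter p"
  shows free_ultrafilter_empty: "{} \<notin> p"
    and free_ultrafilter_Int: "A \<in> p \<Longrightarrow> B \<in> p \<Longrightarrow> A \<inter> B \<in> p"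
    and free_ultrafilter_Compl: "A \<notin> p \<Longrightarrow> - A \<in> p"
    and free_ultrafilter_infinite: "A \<in> p \<Longrightarrow> infinite A"
  using assms unfolding free_ultrafilter_def by blast+

lemma free_ultrafilter_UNIV: "free_ultrafilter p \<Longrightarrow> UNIV \<in> p"
  using free_ultrafilter_Compl free_ultrafilter_empty by fastforce

lemma free_ultrafilter_Int_nonempty:
  "free_ultrafilter p \<Longrightarrow> A \<in> p \<Longrightarrow> B \<in> p \<Longrightarrow> A \<inter> B \<noteq> {}"
  using free_ultrafilter_Int free_ultrafilter_empty by metis

lemma free_ultrafilter_Un_in:
  assumes "free_ultrafilter p" "A \<union> B \<in> p"
  shows "A \<in> p \<or> B \<in> p"
proof (rule ccontr)
  assume "\<not> (A \<in> p \<or> B \<in> p)"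
  then have "- A \<inter> - B \<in> p"
    using free_ultrafilter_Compl free_ultrafilter_Int assms(1) by blast
  moreover have "(A \<union> B) \<inter> (- A \<inter> - B) = {}"
    by blast
  ultimately show False
    using free_ultrafilter_Int_nonempty[OF assms] by blast
qed

lemma free_ultrafilter_UN_in:
  assumes "free_ultrafilter p" "finite I" "(\<Union>i\<in>I. A i) \<in> p"
  shows "\<exists>i\<in>I. A i \<in> p"
  using assms(2,3)
proof (induction I rule: finite_induct)
  case empty
  then show ?case using free_ultrafilter_empty[OF assms(1)] by simp
next
  case (insert i I)
  then have "A i \<in> p \<or> (\<Union>i\<in>I. A i) \<in> p"
    using free_ultrafilter_Un_in[OF assms(1)] by simp
  then show ?case
    using insert.IH by blast
qed

lemma plim_exists:
  assumes "free_ultrafilter p" "compact X" "\<And>n. x n \<in> X"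
  shows "\<exists>y\<in>X. plim p x y"
proof (rule ccontr)
  assume "\<not> ?thesis"
  then have "\<forall>y\<in>X. \<exists>V. open V \<and> y \<in> V \<and> {n. x n \<in> V} \<notin> p"
    unfolding plim_def by blast
  then obtain V where V: "\<And>y. y \<in> X \<Longrightarrow> open (V y) \<and> y \<in> V y \<and> {n. x n \<in> V y} \<notin> p"
    by (metis bchoice)
  obtain F where F: "F \<subseteq> X" "finite F" "X \<subseteq> (\<Union>y\<in>F. V y)"
    by (rule compactE_image[OF assms(2), of X V]) (use V in blast)+
  have "(\<Union>y\<in>F. {n. x n \<in> V y}) = UNIV"
    using F(3) assms(3) by blast
  then obtain y where "y \<in> F" "{n. x n \<in> V y} \<in> p"
    using free_ultrafilter_UN_in[OF assms(1) F(2)] free_ultrafilter_UNIV[OF assms(1)] by metis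
  then show False
    using V F(1) by blast
qed

lemma plim_unique:
  fixes x :: "nat \<Rightarrow> 'a::t2_space"
  assumes "free_ultrafilter p" "plim p x y" "plim p x z"
  shows "y = z"
proof (rule ccontr)
  assume "y \<noteq> z"
  then obtain U V where UV: "open U" "open V" "y \<in> U" "z \<in> V" "U \<inter> V = {}"
    using hausdorff[OF \<open>y \<noteq> z\<close>] by blast
  then have "{n. x n \<in> U} \<in> p" "{n. x n \<in> V} \<in> p"
    using assms(2,3) unfolding plim_def by simp_all
  moreover have "{n. x n \<in> U} \<inter> {n. x n \<in> V} = {}"
    using UV(5) by auto
  ultimately show False
    using free_ultrafilter_Int_nonempty[OF assms(1)] by blast
qed

lemma funpow_in: "f ` X \<subseteq> X \<Longrightarrow> x \<in> X \<Longrightarrow> (f ^^ n) x \<in> X"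
  by (induction n) auto

lemma
  fixes X :: "'a::t2_space set"
  assumes "free_ultrafilter p" "compact X" "f ` X \<subseteq> X" "x \<in> X"
  shows p_iterate_in: "p_iterate X p f x \<in> X"
    and plim_p_iterate: "plim p (\<lambda>n. (f ^^ n) x) (p_iterate X p f x)"
proof -
  obtain y where y: "y \<in> X" "plim p (\<lambda>n. (f ^^ n) x) y"
    using plim_exists[OF assms(1,2), of "\<lambda>n. (f ^^ n) x"] funpow_in[OF assms(3,4)] by blast
  have "p_iterate X p f x = y"
    unfolding p_iterate_def
  proof (rule the_equality)
    show "y \<in> X \<and> plim p (\<lambda>n. (f ^^ n) x) y"
      using y by blast
    show "y' = y" if "y' \<in> X \<and> plim p (\<lambda>n. (f ^^ n) x) y'" for y'
      using plim_unique[OF assms(1) _ y(2)] that by blast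
  qed
  with y show "p_iterate X p f x \<in> X" "plim p (\<lambda>n. (f ^^ n) x) (p_iterate X p f x)"
    by simp_all
qed

lemma plim_isolated:
  assumes "plim p x y" "\<not> y islimpt X" "\<And>n. x n \<in> X"
  shows "{n. x n = y} \<in> p"
proof -
  obtain T where T: "open T" "y \<in> T" "\<And>z. z \<in> X \<Longrightarrow> z \<in> T \<Longrightarrow> z = y"
    using assms(2) unfolding islimpt_def by blast
  then have "{n. x n \<in> T} \<in> p"
    using assms(1) unfolding plim_def by blast
  moreover have "{n. x n \<in> T} = {n. x n = y}"
    using T(2,3) assms(3) by blast
  ultimately show ?thesis
    by simp
qed

lemma tendsto_isolated_eventually_eq:
  assumes "(g \<longlongrightarrow> y) F" "\<not> y islimpt X" "\<And>n. g n \<in> X"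
  shows "\<forall>\<^sub>F n in F. g n = y"
proof -
  obtain T where T: "open T" "y \<in> T" "\<And>z. z \<in> X \<Longrightarrow> z \<in> T \<Longrightarrow> z = y"
    using assms(2) unfolding islimpt_def by blast
  show ?thesis
    using topological_tendstoD[OF assms(1) T(1,2)] by eventually_elim (use T(3) assms(3) in blast)
qed

lemma periodic_point_if_infinite_visits:
  assumes "infinite {k. (f ^^ k) z = b}"
  shows "periodic_point f b"
proof -
  obtain k where k: "(f ^^ k) z = b"
    using assms not_finite_existsD by blast
  obtain l where l: "l > k" "(f ^^ l) z = b"
    using assms unfolding infinite_nat_iff_unbounded by blast
  have "(f ^^ (l - k)) b = (f ^^ (l - k + k)) z"
    using k by (simp add: funpow_add)
  also have "\<dots> = b"
    using l by simp
  finally show ?thesis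
    unfolding periodic_point_def using l(1) by (intro exI[of _ "l - k"]) simp
qed

lemma infinite_visits_if_periodic_point:
  assumes "periodic_point f b"
  shows "infinite {k. (f ^^ k) b = b}"
proof -
  obtain m where m: "m \<ge> 1" "(f ^^ m) b = b"
    using assms unfolding periodic_point_def by blast
  have "(f ^^ (q * m)) b = b" for q
    using funpow_mod_eq[OF m(2), of "q * m"] by simp
  moreover have "q < Suc q * m" for q
    using mult_le_mono2[OF m(1), of "Suc q"] by simp
  ultimately show ?thesis
    unfolding infinite_nat_iff_unbounded by blast
qed

lemma finite_orbit_if_periodic_point:
  assumes "periodic_point f b"
  shows "finite (orbit f b)"
proof -
  obtain m where m: "m \<ge> 1" "(f ^^ m) b = b"
    using assms unfolding periodic_point_def by blast
  have "(f ^^ i) b \<in> (\<lambda>j. (f ^^ j) b) ` {..<m}" for i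
    using funpow_mod_eq[OF m(2), of i] m(1) by (intro rev_image_eqI[of "i mod m"]) simp_all
  then have "orbit f b \<subseteq> (\<lambda>j. (f ^^ j) b) ` {..<m}"
    unfolding orbit_def by blast
  then show ?thesis
    using finite_subset by blast
qed

lemma omega_limit_eq_orbit_if_infinite_visits:
  fixes f :: "'a::t1_space \<Rightarrow> 'a"
  assumes visits: "infinite {k. (f ^^ k) z = b}"
  shows "omega_limit f z = orbit f b"
proof
  show "orbit f b \<subseteq> omega_limit f z"
  proof
    fix y assume "y \<in> orbit f b"
    then obtain j where j: "y = (f ^^ j) b"
      unfolding orbit_def by blast
    define r where "r k = j + enumerate {k. (f ^^ k) z = b} k" for k
    have "strict_mono r"
      using strict_mono_enumerate[OF visits] unfolding r_def strict_mono_def by simp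
    moreover have "(f ^^ r k) z = y" for k
      using enumerate_in_set[OF visits, of k] unfolding r_def j by (simp add: funpow_add)
    ultimately show "y \<in> omega_limit f z"
      unfolding omega_limit_def by auto
  qed
next
  show "omega_limit f z \<subseteq> orbit f b"
  proof
    fix y assume "y \<in> omega_limit f z"
    then obtain r where r: "strict_mono r" "(\<lambda>k. (f ^^ r k) z) \<longlonglongrightarrow> y"
      unfolding omega_limit_def by blast
    obtain k0 where k0: "(f ^^ k0) z = b"
      using visits not_finite_existsD by blast
    have "(f ^^ r k) z \<in> orbit f b" if "k \<ge> k0" for k
    proof -
      have "r k \<ge> k0"
        using seq_suble[OF r(1), of k] that by linarith
      then have "(f ^^ r k) z = (f ^^ (r k - k0)) b"
        using k0 by (metis funpow_add le_add_diff_inverse2 o_apply)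
      then show ?thesis
        unfolding orbit_def by blast
    qed
    then have "\<forall>\<^sub>F k in sequentially. (f ^^ r k) z \<in> orbit f b"
      by (rule eventually_sequentiallyI)
    moreover have "closed (orbit f b)"
      using finite_orbit_if_periodic_point[OF periodic_point_if_infinite_visits[OF visits]]
      by (rule finite_imp_closed)
    ultimately show "y \<in> orbit f b"
      using Lim_in_closed_set[OF _ _ sequentially_bot r(2)] by blast
  qed
qed

theorem lemma3p4:
  fixes X :: "'a::metric_space set" and f :: "'a \<Rightarrow> 'a" and p :: "nat set set"
    and b :: 'a and a :: "nat \<Rightarrow> 'a"
  assumes "compact X" and "countable X"
    and "continuous_on X f" and "f ` X \<subseteq> X"
    and "\<And>x. x \<in> X \<Longrightarrow> x islimpt X \<Longrightarrow> periodic_point f x"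
    and "free_ultrafilter p"
    and "b \<in> X" and "\<not> b islimpt X"
    and "\<And>n. a n \<in> X"
    and "(\<lambda>n. p_iterate X p f (a n)) \<longlonglongrightarrow> b"
  shows "periodic_point f b \<and>
         (\<forall>\<^sub>F n in sequentially. orbit f b = omega_limit f b \<and> omega_limit f b = omega_limit f (a n))"
proof -
  have "\<forall>\<^sub>F n in sequentially. p_iterate X p f (a n) = b"
    using tendsto_isolated_eventually_eq[OF assms(10,8) p_iterate_in[OF assms(6,1,4,9)]] .
  then have visits: "\<forall>\<^sub>F n in sequentially. infinite {k. (f ^^ k) (a n) = b}"
  proof eventually_elim
    case (elim n)
    have "{k. (f ^^ k) (a n) = b} \<in> p"
      using plim_isolated[OF plim_p_iterate[OF assms(6,1,4,9), of n, unfolded elim]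
          assms(8) funpow_in[OF assms(4,9)]] .
    then show ?case
      by (rule free_ultrafilter_infinite[OF assms(6)])
  qed
  then obtain n where "infinite {k. (f ^^ k) (a n) = b}"
    using eventually_happens'[OF sequentially_bot] by blast
  then have periodic: "periodic_point f b"
    by (rule periodic_point_if_infinite_visits)
  have omega_b: "omega_limit f b = orbit f b"
    using omega_limit_eq_orbit_if_infinite_visits infinite_visits_if_periodic_point[OF periodic] .
  from visits have "\<forall>\<^sub>F n in sequentially.
      orbit f b = omega_limit f b \<and> omega_limit f b = omega_limit f (a n)"
    by eventually_elim (simp add: omega_b omega_limit_eq_orbit_if_infinite_visits)
  with periodic show ?thesis ..
qed

end
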